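(* Let $n\geqslant 2$, let $m_1,\ldots,m_n$ be nonnegative integers, and let $A=(a_{ij})_{1\leqslant i,j\leqslant n}$ be a complex matrix. Let $P(x_1,\ldots,x_n)\in\mathbb{C}[x_1,\ldots,x_n]$ be homogeneous and suppose there is $\nu\in\{1,-1\}$ such that for all $1\leqslant i<j\leqslant n$, $$P(x_1,\ldots,x_{i-1},x_j,x_{i+1},\ldots,x_{j-1},x_i,x_{j+1},\ldots,x_n)=\nu P(x_1,\ldots,x_n).$$ Set $f(x_1,\ldots,x_n)=\|a_{ij}x_j^{m_i}\|_{1\leqslant i,j\leqslant n}\,P(x_1,\ldots,x_n)$. Then, as polynomials in $x$, $$f^*(x,\ldots,x)=P^*(x-m_1,\ldots,x-m_n)\prod_{i=1}^n (x)_{m_i}\times\begin{cases}\|A\| & \text{if } \nu=1,\\ \mathrm{per}(A) & \text{if } \nu=-1.\end{cases}$$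
   Context: $(x)_0=1$ and $(x)_r=x(x-1)\cdots(x-r+1)$ for positive integers $r$. For a polynomial $Q=\sum_{j_1,\ldots,j_n} c_{j_1,\ldots,j_n}x_1^{j_1}\cdots x_n^{j_n}\in\mathbb{C}[x_1,\ldots,x_n]$, $Q^*$ denotes the polynomial $\sum_{j_1,\ldots,j_n} c_{j_1,\ldots,j_n}(x_1)_{j_1}\cdots(x_n)_{j_n}$. For a matrix $B=(b_{ij})_{1\leqslant i,j\leqslant n}$, $\|B\|=\sum_{\sigma\in S_n}\varepsilon(\sigma)\prod_{i=1}^n b_{i,\sigma(i)}$ is its determinant and $\mathrm{per}(B)=\sum_{\sigma\in S_n}\prod_{i=1}^n b_{i,\sigma(i)}$ its permanent, where $S_n$ is the symmetric group on $\{1,\ldots,n\}$ and $\varepsilon(\sigma)$ is the sign of $\sigma$. *)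

theory Defs
  imports "HOL-Library.Poly_Mapping" "HOL-Combinatorics.Combinatorics"
    "HOL-Computational_Algebra.Polynomial"
begin

text \<open>Variable x_i of the paper (1-based) is x_(i-1) here.\<close>
type_synonym mpoly = "(nat \<Rightarrow>\<^sub>0 nat) \<Rightarrow>\<^sub>0 complex"

definition mmonom :: "(nat \<Rightarrow>\<^sub>0 nat) \<Rightarrow> complex \<Rightarrow> mpoly" where
  "mmonom \<alpha> c = Poly_Mapping.single \<alpha> c"

definition var_pow :: "complex \<Rightarrow> nat \<Rightarrow> nat \<Rightarrow> mpoly" where
  "var_pow c j k = mmonom (Poly_Mapping.single j k) c"

definition total_deg :: "(nat \<Rightarrow>\<^sub>0 nat) \<Rightarrow> nat" where
  "total_deg \<alpha> = (\<Sum>i\<in>Poly_Mapping.keys \<alpha>. Poly_Mapping.lookup \<alpha> i)"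

definition homogeneous :: "mpoly \<Rightarrow> bool" where
  "homogeneous P \<longleftrightarrow> (\<exists>d. \<forall>\<alpha>\<in>Poly_Mapping.keys P. total_deg \<alpha> = d)"

definition vars_below :: "nat \<Rightarrow> mpoly \<Rightarrow> bool" where
  "vars_below n P \<longleftrightarrow> (\<forall>\<alpha>\<in>Poly_Mapping.keys P. Poly_Mapping.keys \<alpha> \<subseteq> {0..<n})"

definition exp_perm :: "(nat \<Rightarrow> nat) \<Rightarrow> (nat \<Rightarrow>\<^sub>0 nat) \<Rightarrow> (nat \<Rightarrow>\<^sub>0 nat)" where
  "exp_perm \<tau> \<alpha> = Abs_poly_mapping (\<lambda>k. Poly_Mapping.lookup \<alpha> (\<tau> k))"

definition swap_vars :: "nat \<Rightarrow> nat \<Rightarrow> mpoly \<Rightarrow> mpoly" where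
  "swap_vars i j P = Abs_poly_mapping (\<lambda>\<beta>. Poly_Mapping.lookup P (exp_perm (Transposition.transpose i j) \<beta>))"

definition mscale :: "complex \<Rightarrow> mpoly \<Rightarrow> mpoly" where
  "mscale c P = Poly_Mapping.map (\<lambda>a. c * a) P"

definition detn :: "nat \<Rightarrow> (nat \<Rightarrow> nat \<Rightarrow> 'a::comm_ring_1) \<Rightarrow> 'a" where
  "detn n B = (\<Sum>\<sigma> | \<sigma> permutes {0..<n}. of_int (sign \<sigma>) * (\<Prod>i<n. B i (\<sigma> i)))"

definition pern :: "nat \<Rightarrow> (nat \<Rightarrow> nat \<Rightarrow> 'a::comm_ring_1) \<Rightarrow> 'a" where
  "pern n B = (\<Sum>\<sigma> | \<sigma> permutes {0..<n}. (\<Prod>i<n. B i (\<sigma> i)))"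

definition ffact_poly :: "complex poly \<Rightarrow> nat \<Rightarrow> complex poly" where
  "ffact_poly p r = (\<Prod>k<r. p - of_nat k)"

text \<open>Q^* evaluated at univariate polynomials y_0, y_1, ...:
  Q^*(y) = sum over monomials c_alpha prod_i (y_i)_(alpha_i)\<close>
definition star_eval :: "mpoly \<Rightarrow> (nat \<Rightarrow> complex poly) \<Rightarrow> complex poly" where
  "star_eval Q y = (\<Sum>\<alpha>\<in>Poly_Mapping.keys Q. smult (Poly_Mapping.lookup Q \<alpha>) (\<Prod>i\<in>Poly_Mapping.keys \<alpha>. ffact_poly (y i) (Poly_Mapping.lookup \<alpha> i)))"

end

theory Submission
  imports Defs
begin

text \<open>The argument rests on the rule \<open>(x\<^sup>\<gamma> Q)\<^sup>*(y) = (y)\<^sub>\<gamma> Q\<^sup>*(y - \<gamma>)\<close> for a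
  monomial \<open>x\<^sup>\<gamma>\<close>, which follows from \<open>(y)_(a+b) = (y)_a (y - a)_b\<close>. In the expansion
  of the determinant the term of a permutation \<open>\<sigma>\<close> is a multiple of \<open>x\<^sup>\<gamma>\<close> with
  \<open>\<gamma> = \<Sum>\<^sub>i m\<^sub>i e_(\<sigma> i)\<close>, so it contributes
  \<open>sign \<sigma> \<Prod>\<^sub>i a_(i,\<sigma> i) \<Prod>\<^sub>i (x)_(m\<^sub>i) P\<^sup>*(x - m \<circ> \<sigma>\<^sup>-\<^sup>1)\<close>. As \<open>P\<close> is symmetric
  (\<open>\<nu> = 1\<close>) or antisymmetric (\<open>\<nu> = -1\<close>) under transpositions, so is \<open>P\<^sup>*\<close>, hence
  \<open>P\<^sup>*(x - m \<circ> \<sigma>\<^sup>-\<^sup>1)\<close> is \<open>P\<^sup>*(x - m)\<close> times \<open>1\<close> or \<open>sign \<sigma>\<close>, and the remaining sum over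
  \<open>\<sigma>\<close> is \<open>\<parallel>A\<parallel>\<close> or \<open>per A\<close>.\<close>

lemma ffact_poly_0 [simp]: "ffact_poly p 0 = 1"
  by (simp add: ffact_poly_def)

lemma ffact_poly_add: "ffact_poly p (a + b) = ffact_poly p a * ffact_poly (p - of_nat a) b"
proof (induction b)
  case 0
  then show ?case by simp
next
  case (Suc b)
  have "ffact_poly p (a + Suc b) = ffact_poly p (a + b) * (p - of_nat (a + b))"
    by (simp add: ffact_poly_def)
  also have "\<dots> = ffact_poly p a * (ffact_poly (p - of_nat a) b * (p - of_nat a - of_nat b))"
    using Suc by (simp add: algebra_simps)
  also have "\<dots> = ffact_poly p a * ffact_poly (p - of_nat a) (Suc b)"
    by (simp add: ffact_poly_def)
  finally show ?case .
qed

definition ffact_monom :: "(nat \<Rightarrow> complex poly) \<Rightarrow> (nat \<Rightarrow>\<^sub>0 nat) \<Rightarrow> complex poly" where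
  "ffact_monom y \<alpha> = (\<Prod>i\<in>Poly_Mapping.keys \<alpha>. ffact_poly (y i) (Poly_Mapping.lookup \<alpha> i))"

lemma ffact_monom_superset:
  assumes "finite S" "Poly_Mapping.keys \<alpha> \<subseteq> S"
  shows "ffact_monom y \<alpha> = (\<Prod>i\<in>S. ffact_poly (y i) (Poly_Mapping.lookup \<alpha> i))"
  unfolding ffact_monom_def
  by (rule prod.mono_neutral_left) (use assms in \<open>auto simp: in_keys_iff\<close>)

lemma ffact_monom_add:
  "ffact_monom y (\<gamma> + \<alpha>)
   = ffact_monom y \<gamma> * ffact_monom (\<lambda>i. y i - of_nat (Poly_Mapping.lookup \<gamma> i)) \<alpha>"
proof -
  let ?S = "Poly_Mapping.keys \<gamma> \<union> Poly_Mapping.keys \<alpha>"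
  have "ffact_monom y (\<gamma> + \<alpha>) = (\<Prod>i\<in>?S. ffact_poly (y i) (Poly_Mapping.lookup (\<gamma> + \<alpha>) i))"
    by (rule ffact_monom_superset) (use keys_add[of \<gamma> \<alpha>] in auto)
  also have "\<dots> = (\<Prod>i\<in>?S. ffact_poly (y i) (Poly_Mapping.lookup \<gamma> i)) *
     (\<Prod>i\<in>?S. ffact_poly (y i - of_nat (Poly_Mapping.lookup \<gamma> i)) (Poly_Mapping.lookup \<alpha> i))"
    by (simp add: lookup_add ffact_poly_add prod.distrib)
  also have "\<dots> = ffact_monom y \<gamma> * ffact_monom (\<lambda>i. y i - of_nat (Poly_Mapping.lookup \<gamma> i)) \<alpha>"
    by (subst (1 2) ffact_monom_superset[where S = ?S]) auto
  finally show ?thesis .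
qed

lemma star_eval_eq_ffact_monom:
  "star_eval Q y = (\<Sum>\<alpha>\<in>Poly_Mapping.keys Q. smult (Poly_Mapping.lookup Q \<alpha>) (ffact_monom y \<alpha>))"
  unfolding star_eval_def ffact_monom_def ..

lemma star_eval_superset:
  assumes "finite S" "Poly_Mapping.keys Q \<subseteq> S"
  shows "star_eval Q y = (\<Sum>\<alpha>\<in>S. smult (Poly_Mapping.lookup Q \<alpha>) (ffact_monom y \<alpha>))"
  unfolding star_eval_eq_ffact_monom
  by (rule sum.mono_neutral_left) (use assms in \<open>auto simp: in_keys_iff\<close>)

lemma star_eval_zero [simp]: "star_eval 0 y = 0"
  by (simp add: star_eval_def)

lemma star_eval_add: "star_eval (Q1 + Q2) y = star_eval Q1 y + star_eval Q2 y"
proof -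
  let ?S = "Poly_Mapping.keys Q1 \<union> Poly_Mapping.keys Q2"
  have "star_eval (Q1 + Q2) y = (\<Sum>\<alpha>\<in>?S. smult (Poly_Mapping.lookup (Q1 + Q2) \<alpha>) (ffact_monom y \<alpha>))"
    by (rule star_eval_superset) (use keys_add[of Q1 Q2] in auto)
  also have "\<dots> = star_eval Q1 y + star_eval Q2 y"
    by (simp add: lookup_add smult_add_left sum.distrib star_eval_superset[where S = ?S])
  finally show ?thesis .
qed

lemma star_eval_sum: "star_eval (\<Sum>x\<in>X. Q x) y = (\<Sum>x\<in>X. star_eval (Q x) y)"
  by (induction X rule: infinite_finite_induct) (auto simp: star_eval_add)

lemma star_eval_single: "star_eval (Poly_Mapping.single \<alpha> c) y = smult c (ffact_monom y \<alpha>)"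
  by (subst star_eval_superset[where S = "{\<alpha>}"]) auto

lemma poly_mapping_sum_single_lookup:
  "Q = (\<Sum>\<alpha>\<in>Poly_Mapping.keys Q. Poly_Mapping.single \<alpha> (Poly_Mapping.lookup Q \<alpha>))"
  by (rule poly_mapping_eqI)
     (auto simp: lookup_sum lookup_single when_def in_keys_iff sum.delta)

lemma star_eval_single_mult:
  "star_eval (Poly_Mapping.single \<gamma> c * Q) y
   = smult c (ffact_monom y \<gamma>) * star_eval Q (\<lambda>i. y i - of_nat (Poly_Mapping.lookup \<gamma> i))"
proof -
  have "Poly_Mapping.single \<gamma> c * Q = (\<Sum>\<alpha>\<in>Poly_Mapping.keys Q.
          Poly_Mapping.single (\<gamma> + \<alpha>) (c * Poly_Mapping.lookup Q \<alpha>))"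
    by (subst poly_mapping_sum_single_lookup[of Q]) (simp add: sum_distrib_left mult_single)
  then have "star_eval (Poly_Mapping.single \<gamma> c * Q) y = (\<Sum>\<alpha>\<in>Poly_Mapping.keys Q.
       smult (c * Poly_Mapping.lookup Q \<alpha>) (ffact_monom y (\<gamma> + \<alpha>)))"
    by (simp add: star_eval_sum star_eval_single)
  also have "\<dots> = smult c (ffact_monom y \<gamma>) * star_eval Q (\<lambda>i. y i - of_nat (Poly_Mapping.lookup \<gamma> i))"
    by (simp add: star_eval_eq_ffact_monom ffact_monom_add sum_distrib_left mult_ac)
  finally show ?thesis .
qed

lemma star_eval_mscale: "star_eval (mscale c P) y = smult c (star_eval P y)"
proof -
  have "mscale c P = Poly_Mapping.single 0 c * P"
    unfolding mscale_def by (rule mult_map_scale_conv_mult)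
  then show ?thesis by (simp add: star_eval_single_mult ffact_monom_def)
qed

lemma star_eval_cong:
  assumes "vars_below n P" "\<And>i. i < n \<Longrightarrow> y i = z i"
  shows "star_eval P y = star_eval P z"
  unfolding star_eval_eq_ffact_monom ffact_monom_def
proof (intro sum.cong refl arg_cong[where f = "smult _"] prod.cong)
  fix \<alpha> i assume "\<alpha> \<in> Poly_Mapping.keys P" "i \<in> Poly_Mapping.keys \<alpha>"
  with assms show "ffact_poly (y i) (Poly_Mapping.lookup \<alpha> i) = ffact_poly (z i) (Poly_Mapping.lookup \<alpha> i)"
    by (auto simp: vars_below_def subset_iff)
qed

lemma lookup_exp_perm:
  assumes "inj \<tau>"
  shows "Poly_Mapping.lookup (exp_perm \<tau> \<beta>) k = Poly_Mapping.lookup \<beta> (\<tau> k)"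
proof -
  have "finite (\<tau> -` Poly_Mapping.keys \<beta>)"
    using assms by (intro finite_vimageI) simp_all
  then have "finite {k. Poly_Mapping.lookup \<beta> (\<tau> k) \<noteq> 0}"
    by (simp add: vimage_def in_keys_iff)
  then show ?thesis
    unfolding exp_perm_def by simp
qed

lemma keys_exp_perm:
  "inj \<tau> \<Longrightarrow> Poly_Mapping.keys (exp_perm \<tau> \<beta>) = \<tau> -` Poly_Mapping.keys \<beta>"
  by (auto simp: in_keys_iff lookup_exp_perm)

lemma ffact_monom_exp_perm:
  assumes "bij \<tau>"
  shows "ffact_monom (y \<circ> \<tau>) (exp_perm \<tau> \<alpha>) = ffact_monom y \<alpha>"
proof -
  have "bij_betw \<tau> (\<tau> -` Poly_Mapping.keys \<alpha>) (Poly_Mapping.keys \<alpha>)"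
    using assms by (auto simp: bij_betw_def bij_def inj_on_def)
  then show ?thesis
    using assms by (simp add: ffact_monom_def keys_exp_perm lookup_exp_perm bij_is_inj
        prod.reindex_bij_betw[where g = "\<lambda>k. ffact_poly (y k) (Poly_Mapping.lookup \<alpha> k)"])
qed

lemma exp_perm_transpose_involutory [simp]:
  "exp_perm (Transposition.transpose a b) (exp_perm (Transposition.transpose a b) \<beta>) = \<beta>"
  by (rule poly_mapping_eqI) (simp add: lookup_exp_perm)

lemma lookup_swap_vars:
  "Poly_Mapping.lookup (swap_vars a b P) \<beta>
   = Poly_Mapping.lookup P (exp_perm (Transposition.transpose a b) \<beta>)"
proof -
  let ?e = "exp_perm (Transposition.transpose a b)"
  have "inj ?e"
    by (metis exp_perm_transpose_involutory injI)
  then have "finite (?e -` Poly_Mapping.keys P)"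
    by (intro finite_vimageI) simp_all
  then have "finite {\<beta>. Poly_Mapping.lookup P (?e \<beta>) \<noteq> 0}"
    by (simp add: vimage_def in_keys_iff)
  then show ?thesis
    unfolding swap_vars_def by simp
qed

lemma swap_vars_commute: "swap_vars a b = swap_vars b a"
  by (simp add: swap_vars_def transpose_commute fun_eq_iff)

lemma star_eval_swap_vars:
  "star_eval (swap_vars a b P) y = star_eval P (y \<circ> Transposition.transpose a b)"
proof -
  let ?t = "Transposition.transpose a b"
  let ?e = "exp_perm ?t"
  have keys: "Poly_Mapping.keys (swap_vars a b P) = ?e ` Poly_Mapping.keys P"
    by (force simp: in_keys_iff lookup_swap_vars)
  have "star_eval (swap_vars a b P) y
      = (\<Sum>\<beta>\<in>?e ` Poly_Mapping.keys P. smult (Poly_Mapping.lookup P (?e \<beta>)) (ffact_monom y \<beta>))"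
    unfolding star_eval_eq_ffact_monom keys lookup_swap_vars ..
  also have "\<dots> = (\<Sum>\<alpha>\<in>Poly_Mapping.keys P. smult (Poly_Mapping.lookup P \<alpha>) (ffact_monom y (?e \<alpha>)))"
    by (subst sum.reindex) (auto simp: inj_on_def dest: arg_cong[where f = ?e])
  also have "\<dots> = star_eval P (y \<circ> ?t)"
    using ffact_monom_exp_perm[of ?t "y \<circ> ?t"]
    by (simp add: star_eval_eq_ffact_monom comp_assoc bij_transpose)
  finally show ?thesis .
qed

text \<open>The character through which permutations of the variables act on \<open>P\<^sup>*\<close> when \<open>P\<close>
  is symmetric (\<open>\<nu> = 1\<close>) or antisymmetric (\<open>\<nu> = -1\<close>).\<close>
definition perm_char :: "complex \<Rightarrow> (nat \<Rightarrow> nat) \<Rightarrow> complex" where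
  "perm_char \<nu> \<sigma> = (if \<nu> = 1 then 1 else of_int (sign \<sigma>))"

lemma perm_char_inv: "permutation \<sigma> \<Longrightarrow> perm_char \<nu> (inv \<sigma>) = perm_char \<nu> \<sigma>"
  by (simp add: perm_char_def sign_inverse)

lemma perm_char_transpose_comp:
  assumes "\<nu> \<in> {1, -1}" "permutation p" "a \<noteq> b"
  shows "perm_char \<nu> (Transposition.transpose a b \<circ> p) = \<nu> * perm_char \<nu> p"
  using assms by (auto simp: perm_char_def sign_compose permutation_swap_id sign_swap_id)

lemma star_eval_permute:
  assumes "\<nu> \<in> {1, -1}"
    and sym: "\<forall>i j. i < j \<and> j < n \<longrightarrow> swap_vars i j P = mscale \<nu> P"
    and "\<tau> permutes {0..<n}"
  shows "star_eval P (y \<circ> \<tau>) = smult (perm_char \<nu> \<tau>) (star_eval P y)"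
  using assms(3) finite_atLeastLessThan
proof (induction \<tau> arbitrary: y rule: permutes_induct)
  case id
  then show ?case by (simp add: perm_char_def sign_id)
next
  case (swap a b p)
  let ?t = "Transposition.transpose a b"
  have "swap_vars a b P = mscale \<nu> P"
    using sym swap.hyps(1-3) swap_vars_commute[of a b]
    by (metis atLeastLessThan_iff linorder_neqE_nat)
  then have swap_t: "star_eval P (y \<circ> ?t) = smult \<nu> (star_eval P y)"
    by (metis star_eval_swap_vars star_eval_mscale)
  have "star_eval P (y \<circ> (?t \<circ> p)) = smult (perm_char \<nu> p) (star_eval P (y \<circ> ?t))"
    unfolding comp_assoc[symmetric] by (rule swap.IH)
  also have "\<dots> = smult (perm_char \<nu> (?t \<circ> p)) (star_eval P y)"
    using perm_char_transpose_comp[OF assms(1) permutes_imp_permutation[OF _ swap.hyps(4)]]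
      swap.hyps(3) by (simp add: swap_t mult.commute)
  finally show ?case .
qed

lemma prod_var_pow_eq_single:
  fixes k :: nat
  shows "(\<Prod>i<k. var_pow (A i (\<sigma> i)) (\<sigma> i) (m i))
   = Poly_Mapping.single (\<Sum>i<k. Poly_Mapping.single (\<sigma> i) (m i)) (\<Prod>i<k. A i (\<sigma> i))"
  by (induction k) (simp_all add: var_pow_def mmonom_def mult_single)

lemma of_int_mult_single:
  "of_int k * Poly_Mapping.single \<gamma> c = Poly_Mapping.single \<gamma> (of_int k * (c :: 'b :: comm_ring_1))"
  for \<gamma> :: "'a :: comm_monoid_add"
  by (metis mult_single single_of_int add_0)

lemma detn_var_pow:
  "detn n (\<lambda>i j. var_pow (A i j) j (m i))
   = (\<Sum>\<sigma> | \<sigma> permutes {0..<n}. Poly_Mapping.single (\<Sum>i<n. Poly_Mapping.single (\<sigma> i) (m i))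
        (of_int (sign \<sigma>) * (\<Prod>i<n. A i (\<sigma> i))))"
  unfolding detn_def by (simp add: prod_var_pow_eq_single of_int_mult_single)

lemma lookup_sum_single_permutes:
  fixes \<sigma> :: "nat \<Rightarrow> nat"
  assumes "\<sigma> permutes {0..<n}"
  shows "Poly_Mapping.lookup (\<Sum>i<n. Poly_Mapping.single (\<sigma> i) (m i)) j
         = (if j < n then m (inv \<sigma> j) else 0)"
proof -
  have "Poly_Mapping.lookup (\<Sum>i<n. Poly_Mapping.single (\<sigma> i) (m i)) j
        = (\<Sum>i<n. if inv \<sigma> j = i then m i else 0)"
    unfolding lookup_sum lookup_single when_def
    using permutes_inv_eq[OF assms] by (intro sum.cong) auto
  also have "\<dots> = (if j < n then m (inv \<sigma> j) else 0)"
  proof (cases "j < n")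
    case True
    moreover have "inv \<sigma> j < n"
      using True permutes_in_image[OF permutes_inv[OF assms], of j] by simp
    ultimately show ?thesis
      by simp
  next
    case False
    then show ?thesis
      using permutes_not_in[OF permutes_inv[OF assms], of j] by simp
  qed
  finally show ?thesis .
qed

lemma ffact_monom_sum_single_permutes:
  fixes \<sigma> :: "nat \<Rightarrow> nat"
  assumes "\<sigma> permutes {0..<n}"
  shows "ffact_monom (\<lambda>_. p) (\<Sum>i<n. Poly_Mapping.single (\<sigma> i) (m i))
         = (\<Prod>i<n. ffact_poly p (m i))"
proof -
  let ?\<gamma> = "\<Sum>i<n. Poly_Mapping.single (\<sigma> i) (m i)"
  have "Poly_Mapping.keys ?\<gamma> \<subseteq> {0..<n}"
    by (auto simp: in_keys_iff lookup_sum_single_permutes[OF assms] split: if_splits)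
  then have "ffact_monom (\<lambda>_. p) ?\<gamma> = (\<Prod>j\<in>{0..<n}. ffact_poly p (m (inv \<sigma> j)))"
    by (subst ffact_monom_superset) (auto simp: lookup_sum_single_permutes[OF assms])
  also have "\<dots> = (\<Prod>j\<in>{0..<n}. ffact_poly p (m j))"
    using prod.permute[OF permutes_inv[OF assms], of "\<lambda>j. ffact_poly p (m j)"] by (simp add: comp_def)
  finally show ?thesis
    by (simp add: atLeast0LessThan)
qed

lemma star_eval_sum_single_permutes_mult:
  assumes "vars_below n P" "\<nu> \<in> {1, -1}"
    and "\<forall>i j. i < j \<and> j < n \<longrightarrow> swap_vars i j P = mscale \<nu> P"
    and \<sigma>: "\<sigma> permutes {0..<n}"
  shows "star_eval (Poly_Mapping.single (\<Sum>i<n. Poly_Mapping.single (\<sigma> i) (m i)) c * P) (\<lambda>_. p)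
    = smult (c * perm_char \<nu> \<sigma>) ((\<Prod>i<n. ffact_poly p (m i)) * star_eval P (\<lambda>i. p - of_nat (m i)))"
proof -
  let ?\<gamma> = "\<Sum>i<n. Poly_Mapping.single (\<sigma> i) (m i)"
  have "star_eval P (\<lambda>i. p - of_nat (Poly_Mapping.lookup ?\<gamma> i))
      = star_eval P ((\<lambda>i. p - of_nat (m i)) \<circ> inv \<sigma>)"
    using assms(1) by (rule star_eval_cong) (simp add: lookup_sum_single_permutes[OF \<sigma>])
  also have "\<dots> = smult (perm_char \<nu> \<sigma>) (star_eval P (\<lambda>i. p - of_nat (m i)))"
    using star_eval_permute[OF assms(2,3) permutes_inv[OF \<sigma>]] perm_char_inv[of \<sigma> \<nu>]
      permutes_imp_permutation[OF _ \<sigma>] by simp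
  finally show ?thesis
    by (simp only: star_eval_single_mult ffact_monom_sum_single_permutes[OF \<sigma>]) (simp add: mult_ac)
qed

lemma sum_permutes_sign_perm_char:
  "(\<Sum>\<sigma> | \<sigma> permutes {0..<n}. of_int (sign \<sigma>) * (\<Prod>i<n. A i (\<sigma> i)) * perm_char \<nu> \<sigma>)
   = (if \<nu> = 1 then detn n A else pern n A)"
proof -
  have sign_twice: "of_int (sign \<sigma>) * x * of_int (sign \<sigma>) = (x :: complex)"
    for \<sigma> :: "nat \<Rightarrow> nat" and x
    by (simp add: sign_def)
  show ?thesis
    by (simp add: perm_char_def detn_def pern_def sign_twice)
qed

theorem theorem2p1:
  fixes n :: nat and m :: "nat \<Rightarrow> nat" and A :: "nat \<Rightarrow> nat \<Rightarrow> complex"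
    and P :: mpoly and \<nu> :: complex
  assumes "n \<ge> 2"
    and "vars_below n P"
    and "homogeneous P"
    and "\<nu> \<in> {1, -1}"
    and "\<forall>i j. i < j \<and> j < n \<longrightarrow> swap_vars i j P = mscale \<nu> P"
  shows "star_eval (detn n (\<lambda>i j. var_pow (A i j) j (m i)) * P) (\<lambda>_. [:0, 1:])
         = star_eval P (\<lambda>i. [:- of_nat (m i), 1:])
           * (\<Prod>i<n. ffact_poly [:0, 1:] (m i))
           * [:(if \<nu> = 1 then detn n A else pern n A):]"
proof -
  let ?x = "[:0, 1:] :: complex poly"
  let ?F = "(\<Prod>i<n. ffact_poly ?x (m i)) * star_eval P (\<lambda>i. ?x - of_nat (m i))"
  have x_minus: "?x - of_nat k = [:- of_nat k, 1:]" for k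
    by (simp add: of_nat_poly)
  have "star_eval (detn n (\<lambda>i j. var_pow (A i j) j (m i)) * P) (\<lambda>_. ?x)
      = (\<Sum>\<sigma> | \<sigma> permutes {0..<n}. smult (of_int (sign \<sigma>) * (\<Prod>i<n. A i (\<sigma> i)) * perm_char \<nu> \<sigma>) ?F)"
    unfolding detn_var_pow sum_distrib_right star_eval_sum
    using star_eval_sum_single_permutes_mult[OF assms(2,4,5)] by (intro sum.cong) simp_all
  also have "\<dots> = smult (if \<nu> = 1 then detn n A else pern n A) ?F"
    by (simp only: smult_sum[symmetric] sum_permutes_sign_perm_char)
  finally show ?thesis
    by (simp add: x_minus mult_ac)
qed

end
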